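(* Let $N\ge1$, $K>0$, $r_i>0$, let $(\mu_{ij})$ be a nonnegative, symmetric, irreducible $N\times N$ matrix, and let $\alpha:\mathbb{R}^N\to\mathbb{R}$ be locally Lipschitz with $\alpha(0)=0$, monotone increasing for the componentwise order, and such that there exist positive $R,k,c$ with $c(\sum_jv_j)^k\le\alpha(v)$ for all $v\in[0,\infty)^N$ with $\sum_j|v_j|\ge R$. Let $\bar v$ be the unique positive stationary solution of $$\frac{dv_i}{dt}=v_i\left[r_i-\frac{1}{K}\alpha(v)\right]+\sum_{j=1}^N\mu_{ij}(v_j-v_i),\qquad i=1,\dots,N,$$ and let $v(t)$ be a positive solution of this system defined for all $t\ge0$. Set $\mathcal{E}(v)=\sum_{i=1}^Nv_i^2$ and $\beta(v)=\sum_{i=1}^Nv_i\bar v_i$. Then there exists a constant $C_1$ such that $\mathcal{E}(v(t))+\beta(v(t))\le C_1$ for all $t\ge0$.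
   Context: A stationary solution is a vector at which the right-hand side vanishes for every $i$; positive means all components strictly positive. *)

theory Defs
  imports "HOL-Analysis.Analysis"
begin

text \<open>Vectors in R^N are modelled as real^'n with 'n a finite index type (N = CARD('n) \<ge> 1).
  Matrices are real^'n^'n, entry mu_ij = mu $ i $ j.\<close>

definition locally_lipschitz_fun :: "('a::metric_space \<Rightarrow> real) \<Rightarrow> bool" where
  "locally_lipschitz_fun f \<longleftrightarrow>
     (\<forall>x. \<exists>e>0. \<exists>L. \<forall>y\<in>ball x e. \<forall>z\<in>ball x e. \<bar>f y - f z\<bar> \<le> L * dist y z)"

definition comp_mono :: "(real^'n \<Rightarrow> real) \<Rightarrow> bool" where
  "comp_mono f \<longleftrightarrow> (\<forall>u v. (\<forall>i. u $ i \<le> v $ i) \<longrightarrow> f u \<le> f v)"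

text \<open>Irreducibility of a nonnegative matrix: the directed graph with an edge i -> j
  whenever mu_ij \<noteq> 0 is strongly connected.\<close>
definition irreducible_mat :: "real^'n^'n \<Rightarrow> bool" where
  "irreducible_mat M \<longleftrightarrow> (\<forall>i j. (i, j) \<in> {(a, b). M $ a $ b \<noteq> 0}\<^sup>*)"

definition pos_vec :: "real^'n \<Rightarrow> bool" where
  "pos_vec v \<longleftrightarrow> (\<forall>i. v $ i > 0)"

definition rhs :: "real^'n \<Rightarrow> real \<Rightarrow> real^'n^'n \<Rightarrow> (real^'n \<Rightarrow> real) \<Rightarrow> real^'n \<Rightarrow> real^'n" where
  "rhs r K mu alpha v = (\<chi> i. v $ i * (r $ i - alpha v / K) + (\<Sum>j\<in>UNIV. mu $ i $ j * (v $ j - v $ i)))"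

definition stationary :: "real^'n \<Rightarrow> real \<Rightarrow> real^'n^'n \<Rightarrow> (real^'n \<Rightarrow> real) \<Rightarrow> real^'n \<Rightarrow> bool" where
  "stationary r K mu alpha v \<longleftrightarrow> (\<forall>i. rhs r K mu alpha v $ i = 0)"

definition energy :: "real^'n \<Rightarrow> real" where
  "energy v = (\<Sum>i\<in>UNIV. (v $ i)^2)"

definition beta :: "real^'n \<Rightarrow> real^'n \<Rightarrow> real" where
  "beta vbar v = (\<Sum>i\<in>UNIV. v $ i * vbar $ i)"

end

theory Submission
  imports Defs
begin

text \<open>The symmetric migration terms cancel in the total mass \<open>S = \<Sum>\<^sub>i v\<^sub>i\<close>, so
  \<open>S' = \<Sum>\<^sub>i r\<^sub>i v\<^sub>i - \<alpha>(v) S / K \<le> (\<Sum>\<^sub>i r\<^sub>i - \<alpha>(v) / K) S\<close>.  The growth condition on \<open>\<alpha>\<close>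
  makes the bracket nonpositive once \<open>S\<close> is large, so \<open>S\<close> never rises above
  \<open>max (S 0) M\<^sub>0\<close>.  As all components are nonnegative, the energy is at most \<open>S\<^sup>2\<close>
  and \<open>\<beta>(v) \<le> S \<Sum>\<^sub>i vbar\<^sub>i\<close>.\<close>

lemma sum_mult_le_sum_mult_sum:
  fixes f g :: "'a \<Rightarrow> 'b::linordered_semidom"
  assumes "finite A" and "\<And>i. i \<in> A \<Longrightarrow> f i \<ge> 0" and "\<And>i. i \<in> A \<Longrightarrow> g i \<ge> 0"
  shows "(\<Sum>i\<in>A. f i * g i) \<le> sum f A * sum g A"
proof -
  have "f i * g i \<le> (\<Sum>j\<in>A. f i * g j)" if "i \<in> A" for i
    using assms that by (intro member_le_sum[of i A "\<lambda>j. f i * g j"]) auto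
  then have "(\<Sum>i\<in>A. f i * g i) \<le> (\<Sum>i\<in>A. \<Sum>j\<in>A. f i * g j)"
    by (rule sum_mono)
  also have "\<dots> = sum f A * sum g A"
    by (rule sum_product[symmetric])
  finally show ?thesis .
qed

lemma sum_symmetric_migration_eq_0:
  fixes mu :: "real^'n^'n" and x :: "real^'n"
  assumes "\<forall>i j. mu $ i $ j = mu $ j $ i"
  shows "(\<Sum>i\<in>UNIV. \<Sum>j\<in>UNIV. mu $ i $ j * (x $ j - x $ i)) = 0"
proof -
  have "(\<Sum>i\<in>UNIV. \<Sum>j\<in>UNIV. mu $ i $ j * x $ j) = (\<Sum>j\<in>UNIV. \<Sum>i\<in>UNIV. mu $ i $ j * x $ j)"
    by (rule sum.swap)
  also have "\<dots> = (\<Sum>j\<in>UNIV. \<Sum>i\<in>UNIV. mu $ j $ i * x $ j)"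
    using assms by simp
  finally show ?thesis
    by (simp add: right_diff_distrib sum_subtractf)
qed

lemma sum_rhs:
  assumes "\<forall>i j. mu $ i $ j = mu $ j $ i"
  shows "(\<Sum>i\<in>UNIV. rhs r K mu alpha x $ i)
       = (\<Sum>i\<in>UNIV. x $ i * r $ i) - alpha x / K * (\<Sum>i\<in>UNIV. x $ i)"
  using sum_symmetric_migration_eq_0[OF assms, of x]
  by (simp add: rhs_def sum.distrib right_diff_distrib sum_subtractf sum_distrib_left
      sum_divide_distrib mult.commute)

lemma sum_rhs_nonpos:
  assumes "\<forall>i j. mu $ i $ j = mu $ j $ i" and "K > 0"
    and "\<forall>i. x $ i \<ge> 0" and "\<forall>i. r $ i \<ge> 0"
    and "K * (\<Sum>i\<in>UNIV. r $ i) \<le> alpha x"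
  shows "(\<Sum>i\<in>UNIV. rhs r K mu alpha x $ i) \<le> 0"
proof -
  have "(\<Sum>i\<in>UNIV. x $ i * r $ i) \<le> (\<Sum>i\<in>UNIV. x $ i) * (\<Sum>i\<in>UNIV. r $ i)"
    using assms by (intro sum_mult_le_sum_mult_sum) auto
  also have "\<dots> \<le> (\<Sum>i\<in>UNIV. x $ i) * (alpha x / K)"
    using assms by (intro mult_left_mono) (auto simp: pos_le_divide_eq mult.commute sum_nonneg)
  finally show ?thesis
    by (simp add: sum_rhs[OF assms(1)] mult.commute)
qed

lemma powr_growth_exceeds:
  fixes c k A :: real
  assumes "c > 0" and "k > 0"
  obtains M where "M > 0" and "\<And>s. s \<ge> M \<Longrightarrow> A \<le> c * s powr k"
proof
  define a where "a = max 1 (A / c)"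
  show "a powr (1 / k) > 0"
    unfolding a_def by simp
  fix s :: real
  assume s: "s \<ge> a powr (1 / k)"
  have "a = (a powr (1 / k)) powr k"
    using assms by (simp add: a_def powr_powr)
  also have "\<dots> \<le> s powr k"
    using s assms by (intro powr_mono2) auto
  finally show "A \<le> c * s powr k"
    using assms by (auto simp: a_def pos_divide_le_eq mult.commute)
qed

lemma alpha_exceeds_for_large_mass:
  fixes alpha :: "real^'n \<Rightarrow> real"
  assumes "\<exists>R k c. R > 0 \<and> k > 0 \<and> c > 0 \<and>
        (\<forall>w. (\<forall>j. w $ j \<ge> 0) \<and> (\<Sum>j\<in>UNIV. \<bar>w $ j\<bar>) \<ge> R
              \<longrightarrow> c * (\<Sum>j\<in>UNIV. w $ j) powr k \<le> alpha w)"
  obtains M where "M > 0"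
    and "\<And>w. \<forall>j. w $ j \<ge> 0 \<Longrightarrow> (\<Sum>j\<in>UNIV. w $ j) \<ge> M \<Longrightarrow> A \<le> alpha w"
proof -
  obtain R k c where "R > 0" "k > 0" "c > 0"
    and grow: "\<And>w. \<forall>j. w $ j \<ge> 0 \<Longrightarrow> (\<Sum>j\<in>UNIV. \<bar>w $ j\<bar>) \<ge> R
                 \<Longrightarrow> c * (\<Sum>j\<in>UNIV. w $ j) powr k \<le> alpha w"
    using assms by blast
  obtain M where "M > 0" and M: "\<And>s. s \<ge> M \<Longrightarrow> A \<le> c * s powr k"
    using powr_growth_exceeds[OF \<open>c > 0\<close> \<open>k > 0\<close>] by blast
  show thesis
  proof (rule that[of "max R M"])
    fix w :: "real^'n"
    assume nonneg: "\<forall>j. w $ j \<ge> 0" and large: "(\<Sum>j\<in>UNIV. w $ j) \<ge> max R M"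
    then have "(\<Sum>j\<in>UNIV. \<bar>w $ j\<bar>) = (\<Sum>j\<in>UNIV. w $ j)"
      by simp
    with nonneg large show "A \<le> alpha w"
      using M[of "\<Sum>j\<in>UNIV. w $ j"] grow[of w] by auto
  qed (use \<open>R > 0\<close> in auto)
qed

lemma bounded_if_deriv_nonpos_above:
  fixes f f' :: "real \<Rightarrow> real"
  assumes deriv: "\<And>t. t \<ge> a \<Longrightarrow> (f has_real_derivative f' t) (at t within {a..})"
    and nonpos: "\<And>t. t \<ge> a \<Longrightarrow> f t > M \<Longrightarrow> f' t \<le> 0"
    and start: "f a \<le> M" and "t \<ge> a"
  shows "f t \<le> M"
proof (rule ccontr)
  assume above_t: "\<not> f t \<le> M"
  have cont: "continuous_on {a..} f"
    using deriv by (intro DERIV_continuous_on) auto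
  define A where "A = {a..t} \<inter> f -` {..M}"
  have "closed A"
    unfolding A_def using cont
    by (intro continuous_closed_preimage) (auto intro: continuous_on_subset)
  moreover have "a \<in> A" "bdd_above A"
    using start \<open>t \<ge> a\<close> by (auto simp: A_def intro: bdd_aboveI[of _ t])
  ultimately have "Sup A \<in> A"
    by (intro closed_contains_Sup) auto
  then have t0: "a \<le> Sup A" "Sup A \<le> t" "f (Sup A) \<le> M"
    by (auto simp: A_def)
  \<comment> \<open>On \<open>(Sup A, t)\<close> the function stays above \<open>M\<close>, hence is nonincreasing there.\<close>
  have "f t \<le> f (Sup A)"
  proof (rule DERIV_nonpos_imp_decreasing_open[where f = f])
    fix z assume z: "Sup A < z" "z < t"
    have "f z > M"
    proof (rule ccontr)
      assume "\<not> f z > M"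
      then have "z \<in> A" using z t0 by (auto simp: A_def)
      then show False using z cSup_upper[OF _ \<open>bdd_above A\<close>] by fastforce
    qed
    moreover have "at z within {a..} = at z"
      using z t0 by (intro at_within_interior) auto
    ultimately show "\<exists>y. (f has_real_derivative y) (at z) \<and> y \<le> 0"
      using deriv[of z] nonpos[of z] z t0 by auto
  qed (use t0 cont in \<open>auto intro: continuous_on_subset\<close>)
  with t0 above_t show False by linarith
qed

theorem lemma4p6:
  fixes K :: real and r :: "real^'n" and mu :: "real^'n^'n"
    and alpha :: "real^'n \<Rightarrow> real" and vbar :: "real^'n" and v :: "real \<Rightarrow> real^'n"
  assumes K_pos: "K > 0"
    and r_pos: "\<forall>i. r $ i > 0"
    and mu_nonneg: "\<forall>i j. mu $ i $ j \<ge> 0"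
    and mu_sym: "\<forall>i j. mu $ i $ j = mu $ j $ i"
    and mu_irred: "irreducible_mat mu"
    and alpha_lip: "locally_lipschitz_fun alpha"
    and alpha_zero: "alpha 0 = 0"
    and alpha_mono: "comp_mono alpha"
    and alpha_growth: "\<exists>R k c. R > 0 \<and> k > 0 \<and> c > 0 \<and>
        (\<forall>w. (\<forall>j. w $ j \<ge> 0) \<and> (\<Sum>j\<in>UNIV. \<bar>w $ j\<bar>) \<ge> R
              \<longrightarrow> c * (\<Sum>j\<in>UNIV. w $ j) powr k \<le> alpha w)"
    and vbar_pos: "pos_vec vbar"
    and vbar_stat: "stationary r K mu alpha vbar"
    and vbar_unique: "\<forall>w. pos_vec w \<and> stationary r K mu alpha w \<longrightarrow> w = vbar"
    and v_pos: "\<forall>t\<ge>0. pos_vec (v t)"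
    and v_ode: "\<forall>t\<ge>0. (v has_vector_derivative rhs r K mu alpha (v t)) (at t within {0..})"
  shows "\<exists>C1. \<forall>t\<ge>0. energy (v t) + beta vbar (v t) \<le> C1"
proof -
  have v_nonneg: "v t $ i \<ge> 0" if "t \<ge> 0" for t i
    using v_pos that by (auto simp: pos_vec_def less_imp_le)
  have vbar_nonneg: "vbar $ i \<ge> 0" for i
    using vbar_pos by (auto simp: pos_vec_def less_imp_le)
  obtain M0 where M0: "\<And>w. \<forall>j. w $ j \<ge> 0 \<Longrightarrow> (\<Sum>j\<in>UNIV. w $ j) \<ge> M0
                         \<Longrightarrow> K * (\<Sum>i\<in>UNIV. r $ i) \<le> alpha w"
    using alpha_exceeds_for_large_mass[OF alpha_growth] by metis
  define S where "S t = (\<Sum>i\<in>UNIV. v t $ i)" for t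
  have "(S has_real_derivative (\<Sum>i\<in>UNIV. rhs r K mu alpha (v t) $ i)) (at t within {0..})"
    if "t \<ge> 0" for t
    unfolding S_def[abs_def] has_real_derivative_iff_has_vector_derivative
    using v_ode that
    by (intro has_vector_derivative_sum bounded_linear.has_vector_derivative[OF bounded_linear_vec_nth]) auto
  moreover have "(\<Sum>i\<in>UNIV. rhs r K mu alpha (v t) $ i) \<le> 0" if "t \<ge> 0" "S t > M0" for t
    using that v_nonneg r_pos unfolding S_def
    by (intro sum_rhs_nonpos[OF mu_sym K_pos] M0) (auto simp: less_imp_le)
  ultimately have S_bound: "S t \<le> max (S 0) M0" if "t \<ge> 0" for t
    by (rule bounded_if_deriv_nonpos_above[where a = 0]) (use that in auto)
  have "energy (v t) + beta vbar (v t)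
          \<le> max (S 0) M0 * max (S 0) M0 + max (S 0) M0 * (\<Sum>i\<in>UNIV. vbar $ i)" if "t \<ge> 0" for t
  proof -
    have "energy (v t) \<le> S t * S t" "beta vbar (v t) \<le> S t * (\<Sum>i\<in>UNIV. vbar $ i)"
      unfolding energy_def beta_def S_def power2_eq_square
      using that v_nonneg vbar_nonneg by (auto intro: sum_mult_le_sum_mult_sum)
    moreover have "0 \<le> S t" "0 \<le> (\<Sum>i\<in>UNIV. vbar $ i)"
      using that v_nonneg vbar_nonneg by (auto simp: S_def sum_nonneg)
    ultimately show ?thesis
      using S_bound[OF that] by (smt (verit) mult_mono mult_right_mono)
  qed
  then show ?thesis by blast
qed

end
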